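(* Let $\Omega\subset\mathbb{R}^n$ be a bounded domain with the uniform $C^1$-regularity property, $\Delta t>0$, $V=W^3(\mathrm{div};\Omega)$, $Q=L^{3/2}(\Omega)$. Let $f^k\in L^3(\Omega)$, $S_b^k\in W^{1/3,3/2}(\partial\Omega)$, $S^{k-1}\in L^{3/2}(\Omega)$, and $\phi,\alpha^k,\beta^k,\gamma^k,\gamma^{k-1}\in L^\infty(\Omega)$ with $0<\underline{\phi}\le\phi\le\overline{\phi}<\infty$, $0<\underline{\alpha}\le\alpha^k\le\overline{\alpha}<\infty$, $0<\underline{\beta}\le\beta^k\le\overline{\beta}<\infty$, $0<\underline{\gamma}\le\gamma^k,\gamma^{k-1}\le\overline{\gamma}<\infty$ a.e. For $\varepsilon>0$ let $(\mathbf{m}_\varepsilon,S_\varepsilon)\in V\times Q$ be the unique solution of $$\int_\Omega(\alpha^k+\beta^k|\mathbf{m}_\varepsilon|)(\mathbf{m}_\varepsilon\cdot\mathbf{v})\,d\mathbf{x}+\varepsilon\int_\Omega|\mathrm{div}\,\mathbf{m}_\varepsilon|\,\mathrm{div}\,\mathbf{m}_\varepsilon\,\mathrm{div}\,\mathbf{v}\,d\mathbf{x}-\int_\Omega\mathrm{div}(\mathbf{v})S_\varepsilon\,d\mathbf{x}=-\int_{\partial\Omega}S_b^k(\mathbf{v}\cdot\mathbf{n})\,d\sigma\quad\forall\mathbf{v}\in V,$$ $$\int_\Omega\frac{\phi\gamma^k}{\Delta t}\frac{S_\varepsilon}{\sqrt{|S_\varepsilon|}}q\,d\mathbf{x}+\int_\Omega\mathrm{div}(\mathbf{m}_\varepsilon)q\,d\mathbf{x}=\int_\Omega\Big(f^k+\frac{\phi\gamma^{k-1}}{\Delta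 t}\frac{S^{k-1}}{\sqrt{|S^{k-1}|}}\Big)q\,d\mathbf{x}\quad\forall q\in Q.$$ Then there exist constants $\mathcal{K}_{\mathbf{m}},\mathcal{K}_S$, independent of $\varepsilon$, such that $\|\mathbf{m}_\varepsilon\|_V\le\mathcal{K}_{\mathbf{m}}$ and $\|S_\varepsilon\|_Q\le\mathcal{K}_S$ for every $\varepsilon>0$.
   Context: $W^3(\mathrm{div};\Omega):=\{\mathbf{v}\in(L^3(\Omega))^n:\mathrm{div}(\mathbf{v})\in L^3(\Omega)\}$ with norm $\|\mathbf{v}\|_V=(\|\mathbf{v}\|_{L^3}^3+\|\mathrm{div}\,\mathbf{v}\|_{L^3}^3)^{1/3}$; $\|\cdot\|_Q$ is the $L^{3/2}$ norm. The normal trace $\mathbf{v}\cdot\mathbf{n}$ lies in $(W^{1/3,3/2}(\partial\Omega))'$ and the boundary integral denotes the duality pairing. $p/\sqrt{|p|}:=0$ where $p=0$. *)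

theory Defs
  imports "HOL-Analysis.Analysis"
begin

definition Lp :: "real \<Rightarrow> (real^'n) set \<Rightarrow> (real^'n \<Rightarrow> real) set" where
  "Lp p \<Omega> = {f. set_borel_measurable lebesgue \<Omega> f \<and>
                 set_integrable lebesgue \<Omega> (\<lambda>x. \<bar>f x\<bar> powr p)}"

definition Lp_vec :: "real \<Rightarrow> (real^'n) set \<Rightarrow> (real^'n \<Rightarrow> real^'n) set" where
  "Lp_vec p \<Omega> = {v. set_borel_measurable lebesgue \<Omega> v \<and>
                     set_integrable lebesgue \<Omega> (\<lambda>x. norm (v x) powr p)}"

definition Lp_norm :: "real \<Rightarrow> (real^'n) set \<Rightarrow> (real^'n \<Rightarrow> real) \<Rightarrow> real" where
  "Lp_norm p \<Omega> f = (LINT x:\<Omega>|lebesgue. \<bar>f x\<bar> powr p) powr (1 / p)"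

definition ess_bounded_between :: "(real^'n) set \<Rightarrow> real \<Rightarrow> real \<Rightarrow> (real^'n \<Rightarrow> real) \<Rightarrow> bool" where
  "ess_bounded_between \<Omega> lo hi c \<longleftrightarrow> set_borel_measurable lebesgue \<Omega> c \<and>
     (AE x in lebesgue. x \<in> \<Omega> \<longrightarrow> lo \<le> c x \<and> c x \<le> hi)"

definition pd :: "'n::finite \<Rightarrow> (real^'n \<Rightarrow> real) \<Rightarrow> real^'n \<Rightarrow> real" where
  "pd i f x = frechet_derivative f (at x) (axis i 1)"

fun iter_pd :: "'n::finite list \<Rightarrow> (real^'n \<Rightarrow> real) \<Rightarrow> real^'n \<Rightarrow> real" where
  "iter_pd [] f = f"
| "iter_pd (i # is) f = pd i (iter_pd is f)"

definition smooth :: "(real^'n::finite \<Rightarrow> real) \<Rightarrow> bool" where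
  "smooth f \<longleftrightarrow> (\<forall>is x. iter_pd is f differentiable (at x))"

definition test_fun :: "(real^'n::finite) set \<Rightarrow> (real^'n \<Rightarrow> real) \<Rightarrow> bool" where
  "test_fun \<Omega> \<phi> \<longleftrightarrow> smooth \<phi> \<and> compact (closure {x. \<phi> x \<noteq> 0})
                        \<and> closure {x. \<phi> x \<noteq> 0} \<subseteq> \<Omega>"

definition is_weak_div :: "(real^'n::finite) set \<Rightarrow> (real^'n \<Rightarrow> real^'n) \<Rightarrow> (real^'n \<Rightarrow> real) \<Rightarrow> bool" where
  "is_weak_div \<Omega> v d \<longleftrightarrow> (\<forall>\<phi>. test_fun \<Omega> \<phi> \<longrightarrow>
     (LINT x:\<Omega>|lebesgue. (\<Sum>i\<in>UNIV. v x $ i * pd i \<phi> x)) = - (LINT x:\<Omega>|lebesgue. d x * \<phi> x))"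

definition is_weak_grad :: "(real^'n::finite) set \<Rightarrow> (real^'n \<Rightarrow> real) \<Rightarrow> (real^'n \<Rightarrow> real^'n) \<Rightarrow> bool" where
  "is_weak_grad \<Omega> u g \<longleftrightarrow> (\<forall>\<phi> i. test_fun \<Omega> \<phi> \<longrightarrow>
     (LINT x:\<Omega>|lebesgue. u x * pd i \<phi> x) = - (LINT x:\<Omega>|lebesgue. g x $ i * \<phi> x))"

definition Wdiv3 :: "(real^'n::finite) set \<Rightarrow> (real^'n \<Rightarrow> real^'n) set" where
  "Wdiv3 \<Omega> = {v. v \<in> Lp_vec 3 \<Omega> \<and> (\<exists>d. d \<in> Lp 3 \<Omega> \<and> is_weak_div \<Omega> v d)}"

definition wdiv :: "(real^'n::finite) set \<Rightarrow> (real^'n \<Rightarrow> real^'n) \<Rightarrow> real^'n \<Rightarrow> real" where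
  "wdiv \<Omega> v = (SOME d. d \<in> Lp 3 \<Omega> \<and> is_weak_div \<Omega> v d)"

definition Wdiv3_norm :: "(real^'n::finite) set \<Rightarrow> (real^'n \<Rightarrow> real^'n) \<Rightarrow> real" where
  "Wdiv3_norm \<Omega> v = ((LINT x:\<Omega>|lebesgue. norm (v x) powr 3)
                      + (LINT x:\<Omega>|lebesgue. \<bar>wdiv \<Omega> v x\<bar> powr 3)) powr (1/3)"

definition W1p :: "real \<Rightarrow> (real^'n::finite) set \<Rightarrow> (real^'n \<Rightarrow> real) set" where
  "W1p p \<Omega> = {u. u \<in> Lp p \<Omega> \<and> (\<exists>g. g \<in> Lp_vec p \<Omega> \<and> is_weak_grad \<Omega> u g)}"

definition wgrad :: "real \<Rightarrow> (real^'n::finite) set \<Rightarrow> (real^'n \<Rightarrow> real) \<Rightarrow> real^'n \<Rightarrow> real^'n" where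
  "wgrad p \<Omega> u = (SOME g. g \<in> Lp_vec p \<Omega> \<and> is_weak_grad \<Omega> u g)"

text \<open>Duality pairing of the normal trace of v with the boundary datum trace(G),
  where G in W^{1,3/2}(Omega) is a lifting of the datum in W^{1/3,3/2}(boundary).
  This is the Green-formula definition of the normal trace pairing.\<close>
definition normal_trace_pairing :: "(real^'n::finite) set \<Rightarrow> (real^'n \<Rightarrow> real) \<Rightarrow> (real^'n \<Rightarrow> real^'n) \<Rightarrow> real" where
  "normal_trace_pairing \<Omega> G v =
     (LINT x:\<Omega>|lebesgue. v x \<bullet> wgrad (3/2) \<Omega> G x) + (LINT x:\<Omega>|lebesgue. wdiv \<Omega> v x * G x)"

definition sroot :: "real \<Rightarrow> real" where
  "sroot p = (if p = 0 then 0 else p / sqrt \<bar>p\<bar>)"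

section \<open>Uniform C^1-regularity (Adams, Sobolev Spaces, 4.10, m = 1)\<close>

definition C1_map_on :: "(real^'n::finite) set \<Rightarrow> (real^'n \<Rightarrow> real^'n) \<Rightarrow> bool" where
  "C1_map_on S F \<longleftrightarrow> (\<forall>x\<in>S. F differentiable (at x)) \<and>
     (\<forall>l. continuous_on S (\<lambda>x. frechet_derivative F (at x) (axis l 1)))"

definition C1_bounded_by :: "(real^'n::finite) set \<Rightarrow> real \<Rightarrow> (real^'n \<Rightarrow> real^'n) \<Rightarrow> bool" where
  "C1_bounded_by S M F \<longleftrightarrow> (\<forall>x\<in>S. \<forall>i l. \<bar>F x $ i\<bar> \<le> M \<and>
       \<bar>frechet_derivative F (at x) (axis l 1) $ i\<bar> \<le> M)"

definition uniform_C1_regular :: "(real^'n::finite) set \<Rightarrow> bool" where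
  "uniform_C1_regular \<Omega> \<longleftrightarrow>
    (\<exists>(J::nat set) U \<Phi> \<delta> R M k.
       (\<forall>j\<in>J. open (U j)) \<and> frontier \<Omega> \<subseteq> (\<Union>j\<in>J. U j) \<and>
       (\<forall>x. \<exists>e>0. finite {j\<in>J. U j \<inter> ball x e \<noteq> {}}) \<and>
       (\<forall>j\<in>J. bij_betw (\<Phi> j) (U j) (ball 0 1) \<and>
               C1_map_on (U j) (\<Phi> j) \<and> C1_map_on (ball 0 1) (inv_into (U j) (\<Phi> j)) \<and>
               \<Phi> j ` (U j \<inter> \<Omega>) = {y \<in> ball 0 1. y $ k > 0} \<and>
               C1_bounded_by (U j) M (\<Phi> j) \<and>
               C1_bounded_by (ball 0 1) M (inv_into (U j) (\<Phi> j))) \<and>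
       \<delta> > 0 \<and>
       {x \<in> \<Omega>. infdist x (frontier \<Omega>) < \<delta>} \<subseteq> (\<Union>j\<in>J. inv_into (U j) (\<Phi> j) ` ball 0 (1/2)) \<and>
       (\<forall>F\<subseteq>J. finite F \<and> card F = Suc R \<longrightarrow> (\<Inter>j\<in>F. U j) = {}))"

end

theory Submission
  imports Defs
begin

text \<open>Test the flux equation with \<open>m\<^sub>\<epsilon>\<close> and the mass equation with \<open>S\<^sub>\<epsilon>\<close> and with the
  lifting of \<open>S\<^sub>b\<close>, and add: the coupling terms \<open>\<integral> div m\<^sub>\<epsilon> S\<^sub>\<epsilon>\<close> cancel and the boundary
  pairing turns into interior integrals. The left-hand side of the resulting energy identity
  dominates \<open>\<beta> \<integral>|m\<^sub>\<epsilon>|\<^sup>3 + (\<phi>\<gamma>/\<Delta>t) \<integral>|S\<^sub>\<epsilon>|^(3/2)\<close>, the \<open>\<epsilon>\<close>-term being nonnegative, and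
  Young's inequality with exponents 3 and 3/2 bounds every term on the right by a small multiple
  of these two integrals plus data. Testing the mass equation with \<open>|div m\<^sub>\<epsilon>| div m\<^sub>\<epsilon>\<close> then
  bounds \<open>\<integral>|div m\<^sub>\<epsilon>|^3\<close> by \<open>\<integral>|S\<^sub>\<epsilon>|^(3/2)\<close>. No constant involves \<open>\<epsilon>\<close>.\<close>

lemma young_cube_three_halves:
  fixes x y l :: real
  assumes "0 \<le> x" "0 \<le> y" "0 < l"
  shows "x * y \<le> l * (y * sqrt y) + x ^ 3 / l\<^sup>2"
proof (cases "x \<le> l * sqrt y")
  case True
  then have "x * y \<le> l * sqrt y * y"
    using assms by (simp add: mult_right_mono)
  then show ?thesis
    using assms by (simp add: algebra_simps add_increasing2)
next
  case False
  then have "sqrt y < x / l"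
    using assms by (simp add: field_simps)
  then have "(sqrt y)\<^sup>2 < (x / l)\<^sup>2"
    using assms by (intro power_strict_mono) auto
  then have "x * y \<le> x ^ 3 / l\<^sup>2"
    using assms mult_left_mono[of y "(x / l)\<^sup>2" x]
    by (simp add: power2_eq_square power3_eq_cube field_simps)
  then show ?thesis
    using assms by (simp add: add_increasing)
qed

lemma cube_of_sum_le:
  fixes p q :: real
  assumes "0 \<le> p" "0 \<le> q"
  shows "(p + q) ^ 3 \<le> 4 * (p ^ 3 + q ^ 3)"
proof -
  have "4 * (p ^ 3 + q ^ 3) - (p + q) ^ 3 = 3 * (p + q) * (p - q)\<^sup>2"
    by (simp add: power2_eq_square power3_eq_cube algebra_simps)
  then show ?thesis
    using assms by (metis diff_ge_0_iff_ge zero_le_mult_iff zero_le_power2 add_nonneg_nonneg zero_le_numeral)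
qed

lemma square_le_one_plus_cube:
  fixes t :: real
  assumes "0 \<le> t"
  shows "t\<^sup>2 \<le> 1 + t ^ 3"
proof (cases "t \<le> 1")
  case True
  then show ?thesis
    using assms by (simp add: power_le_one add_increasing2)
next
  case False
  then show ?thesis
    by (simp add: power_increasing add_increasing)
qed

lemma cube_of_scaled_sqrt:
  fixes k t :: real
  assumes "0 \<le> t"
  shows "(k * sqrt t) ^ 3 = k ^ 3 * (t * sqrt t)"
  using assms by (simp add: power_mult_distrib power3_eq_cube)

lemma square_mult_sqrt_square: "(t::real)\<^sup>2 * sqrt (t\<^sup>2) = \<bar>t\<bar> ^ 3"
  by (simp add: power2_eq_square power3_eq_cube)

lemma powr_three: "0 \<le> (t::real) \<Longrightarrow> t powr 3 = t ^ 3"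
  by (cases "t = 0") (auto simp: powr_realpow)

lemma powr_three_halves: "0 \<le> (t::real) \<Longrightarrow> t powr (3 / 2) = t * sqrt t"
  using powr_add[of t 1 "1/2"] by (cases "t = 0") (auto simp: powr_half_sqrt)

lemma abs_sroot: "\<bar>sroot p\<bar> = sqrt \<bar>p\<bar>"
  by (cases "p = 0") (auto simp: sroot_def abs_div field_simps)

lemma sroot_mult_self: "sroot p * p = \<bar>p\<bar> * sqrt \<bar>p\<bar>"
proof (cases "p = 0")
  case False
  have "p * p = \<bar>p\<bar> * (sqrt \<bar>p\<bar> * sqrt \<bar>p\<bar>)"
    by simp
  then show ?thesis
    using False by (simp add: sroot_def field_simps)
qed (simp add: sroot_def)

lemma borel_measurable_sroot [measurable]:
  "f \<in> borel_measurable M \<Longrightarrow> (\<lambda>x. sroot (f x)) \<in> borel_measurable M"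
proof -
  have "(\<lambda>x. sroot (f x)) = (\<lambda>x. f x / sqrt \<bar>f x\<bar>)"
    by (simp add: sroot_def fun_eq_iff)
  moreover assume "f \<in> borel_measurable M"
  ultimately show ?thesis
    by simp
qed

lemma integral_young_cube_three_halves:
  fixes u v w :: "'a \<Rightarrow> real"
  assumes u: "integrable M (\<lambda>x. u x ^ 3)" "\<And>x. 0 \<le> u x"
    and v: "integrable M (\<lambda>x. v x * sqrt (v x))" "\<And>x. 0 \<le> v x"
    and w: "w \<in> borel_measurable M" "AE x in M. \<bar>w x\<bar> \<le> u x * v x"
    and l: "0 < l"
  shows "\<bar>\<integral>x. w x \<partial>M\<bar> \<le> l * (\<integral>x. v x * sqrt (v x) \<partial>M) + (\<integral>x. u x ^ 3 \<partial>M) / l\<^sup>2"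
proof -
  define F where "F = (\<lambda>x. l * (v x * sqrt (v x)) + u x ^ 3 / l\<^sup>2)"
  have F: "integrable M F"
    unfolding F_def using u v by auto
  have dominated: "AE x in M. \<bar>w x\<bar> \<le> F x"
    using w(2)
  proof eventually_elim
    case (elim x)
    then show ?case
      using young_cube_three_halves[OF u(2)[of x] v(2)[of x] l] by (simp add: F_def)
  qed
  have "integrable M w"
    by (rule Bochner_Integration.integrable_bound[OF F w(1)]) (use dominated in \<open>auto elim!: eventually_mono\<close>)
  then have "\<bar>\<integral>x. w x \<partial>M\<bar> \<le> integral\<^sup>L M F"
    using integral_abs_bound[of M w] integral_mono_AE[OF integrable_abs F dominated] by linarith
  also have "\<dots> = l * (\<integral>x. v x * sqrt (v x) \<partial>M) + (\<integral>x. u x ^ 3 \<partial>M) / l\<^sup>2"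
    using u v by (simp add: F_def)
  finally show ?thesis .
qed

lemma integrable_cube_add_mult_sroot:
  fixes f k p :: "'a \<Rightarrow> real"
  assumes [measurable]: "f \<in> borel_measurable M" "k \<in> borel_measurable M" "p \<in> borel_measurable M"
    and "integrable M (\<lambda>x. \<bar>f x\<bar> ^ 3)" "integrable M (\<lambda>x. \<bar>p x\<bar> * sqrt \<bar>p x\<bar>)"
    and "AE x in M. \<bar>k x\<bar> \<le> K"
  shows "integrable M (\<lambda>x. \<bar>f x + k x * sroot (p x)\<bar> ^ 3)"
proof (rule Bochner_Integration.integrable_bound)
  show "integrable M (\<lambda>x. 4 * \<bar>f x\<bar> ^ 3 + 4 * K ^ 3 * (\<bar>p x\<bar> * sqrt \<bar>p x\<bar>))"
    using assms(4,5) by simp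
  show "(\<lambda>x. \<bar>f x + k x * sroot (p x)\<bar> ^ 3) \<in> borel_measurable M"
    by measurable
  show "AE x in M. norm (\<bar>f x + k x * sroot (p x)\<bar> ^ 3)
      \<le> norm (4 * \<bar>f x\<bar> ^ 3 + 4 * K ^ 3 * (\<bar>p x\<bar> * sqrt \<bar>p x\<bar>))"
    using assms(6)
  proof eventually_elim
    case (elim x)
    have "\<bar>k x * sroot (p x)\<bar> \<le> K * sqrt \<bar>p x\<bar>"
      using elim by (simp add: abs_mult abs_sroot mult_right_mono)
    then have "\<bar>f x + k x * sroot (p x)\<bar> ^ 3 \<le> (\<bar>f x\<bar> + K * sqrt \<bar>p x\<bar>) ^ 3"
      by (intro power_mono) auto
    also have "\<dots> \<le> 4 * (\<bar>f x\<bar> ^ 3 + (K * sqrt \<bar>p x\<bar>) ^ 3)"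
      using elim by (intro cube_of_sum_le) auto
    finally show ?case
      by (simp add: cube_of_scaled_sqrt)
  qed
qed

text \<open>An abstraction of the setting to a finite measure space: \<open>M\<close> is \<open>\<Omega>\<close> with Lebesgue measure,
  \<open>c\<close> stands for \<open>\<phi>\<gamma>\<^sup>k/\<Delta>t\<close>, \<open>g\<close> for the right-hand side of the mass equation, \<open>G\<close> for the
  lifting of the boundary datum and \<open>h\<close> for its weak gradient.\<close>

locale mixed_problem_data = finite_measure M
  for M :: "'a measure"
    and c a b g G :: "'a \<Rightarrow> real" and h :: "'a \<Rightarrow> 'b::euclidean_space"
    and c_lo c_hi a_hi b_lo b_hi :: real +
  assumes c_lo_pos: "0 < c_lo" and c_lo_le_c_hi: "c_lo \<le> c_hi" and b_lo_pos: "0 < b_lo"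
    and measurable_data [measurable]:
      "c \<in> borel_measurable M" "a \<in> borel_measurable M" "b \<in> borel_measurable M"
      "g \<in> borel_measurable M" "G \<in> borel_measurable M" "h \<in> borel_measurable M"
    and coefficient_bounds: "AE x in M. c_lo \<le> c x \<and> c x \<le> c_hi \<and>
      0 \<le> a x \<and> a x \<le> a_hi \<and> b_lo \<le> b x \<and> b x \<le> b_hi"
    and integrable_g: "integrable M (\<lambda>x. \<bar>g x\<bar> ^ 3)"
    and integrable_G: "integrable M (\<lambda>x. \<bar>G x\<bar> * sqrt \<bar>G x\<bar>)"
    and integrable_h: "integrable M (\<lambda>x. norm (h x) * sqrt (norm (h x)))"
begin

lemma c_hi_pos: "0 < c_hi"
  using c_lo_pos c_lo_le_c_hi by linarith

definition data_bound :: real where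
  "data_bound = 16 * (\<integral>x. \<bar>g x\<bar> ^ 3 \<partial>M) / c_lo\<^sup>2 + (\<integral>x. \<bar>g x\<bar> ^ 3 \<partial>M)
     + sqrt (2 / b_lo) * (\<integral>x. norm (h x) * sqrt (norm (h x)) \<partial>M)
     + (\<integral>x. \<bar>G x\<bar> * sqrt \<bar>G x\<bar> \<partial>M) + sqrt (4 * c_hi ^ 3 / c_lo) * (\<integral>x. \<bar>G x\<bar> * sqrt \<bar>G x\<bar> \<partial>M)"

lemma c_sroot_integral_le:
  assumes t: "t \<in> borel_measurable M" "integrable M (\<lambda>x. \<bar>t x\<bar> * sqrt \<bar>t x\<bar>)"
    and q: "q \<in> borel_measurable M" "\<And>x. \<bar>q x\<bar> \<le> v x"
    and v: "integrable M (\<lambda>x. v x * sqrt (v x))"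
    and l: "0 < l"
  shows "\<bar>\<integral>x. c x * sroot (t x) * q x \<partial>M\<bar>
    \<le> l * (\<integral>x. v x * sqrt (v x) \<partial>M) + c_hi ^ 3 * (\<integral>x. \<bar>t x\<bar> * sqrt \<bar>t x\<bar> \<partial>M) / l\<^sup>2"
proof -
  have v_nonneg: "0 \<le> v x" for x
    using q(2)[of x] by linarith
  have "AE x in M. \<bar>c x * sroot (t x) * q x\<bar> \<le> c_hi * sqrt \<bar>t x\<bar> * v x"
    using coefficient_bounds
  proof eventually_elim
    case (elim x)
    have "\<bar>c x * sroot (t x) * q x\<bar> = \<bar>c x\<bar> * sqrt \<bar>t x\<bar> * \<bar>q x\<bar>"
      by (simp add: abs_mult abs_sroot)
    also have "\<dots> \<le> c_hi * sqrt \<bar>t x\<bar> * v x"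
      using elim c_lo_pos q(2)[of x] by (intro mult_mono) auto
    finally show ?case .
  qed
  moreover have "(\<lambda>x. (c_hi * sqrt \<bar>t x\<bar>) ^ 3) = (\<lambda>x. c_hi ^ 3 * (\<bar>t x\<bar> * sqrt \<bar>t x\<bar>))"
    by (simp add: cube_of_scaled_sqrt)
  ultimately show ?thesis
    using integral_young_cube_three_halves[of M "\<lambda>x. c_hi * sqrt \<bar>t x\<bar>" v "\<lambda>x. c x * sroot (t x) * q x" l]
      t q v l v_nonneg c_hi_pos by simp
qed

end

text \<open>\<open>d\<close> stands for \<open>div m\<close>; the hypotheses are the weak formulation tested with \<open>v = m\<close>
  and with \<open>q = s, G, |d| d\<close>.\<close>

locale tested_weak_solution = mixed_problem_data +
  fixes \<epsilon> :: real and m :: "'a \<Rightarrow> 'b" and s d :: "'a \<Rightarrow> real"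
  assumes eps_nonneg: "0 \<le> \<epsilon>"
    and measurable_solution [measurable]:
      "m \<in> borel_measurable M" "s \<in> borel_measurable M" "d \<in> borel_measurable M"
    and integrable_m: "integrable M (\<lambda>x. norm (m x) ^ 3)"
    and integrable_s: "integrable M (\<lambda>x. \<bar>s x\<bar> * sqrt \<bar>s x\<bar>)"
    and integrable_d: "integrable M (\<lambda>x. \<bar>d x\<bar> ^ 3)"
    and flux_equation_tested:
      "(\<integral>x. (a x + b x * norm (m x)) * (m x \<bullet> m x) \<partial>M) + \<epsilon> * (\<integral>x. \<bar>d x\<bar> * d x * d x \<partial>M)
         - (\<integral>x. d x * s x \<partial>M) = - ((\<integral>x. m x \<bullet> h x \<partial>M) + (\<integral>x. d x * G x \<partial>M))"
    and mass_equation_tested: "\<And>q. q \<in> {s, G, \<lambda>x. \<bar>d x\<bar> * d x} \<Longrightarrow>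
      (\<integral>x. c x * sroot (s x) * q x \<partial>M) + (\<integral>x. d x * q x \<partial>M) = (\<integral>x. g x * q x \<partial>M)"
begin

lemma flux_energy_lower:
  "b_lo * (\<integral>x. norm (m x) ^ 3 \<partial>M) \<le> (\<integral>x. (a x + b x * norm (m x)) * (m x \<bullet> m x) \<partial>M)"
proof -
  have bounds: "AE x in M. \<bar>(a x + b x * norm (m x)) * (m x \<bullet> m x)\<bar> \<le> a_hi + (a_hi + b_hi) * norm (m x) ^ 3
      \<and> b_lo * norm (m x) ^ 3 \<le> (a x + b x * norm (m x)) * (m x \<bullet> m x)"
    using coefficient_bounds
  proof eventually_elim
    case (elim x)
    define t where "t = norm (m x)"
    have t: "0 \<le> t"
      by (simp add: t_def)
    have split: "(a x + b x * norm (m x)) * (m x \<bullet> m x) = a x * t\<^sup>2 + b x * t ^ 3"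
      by (simp add: t_def power2_norm_eq_inner[symmetric] power2_eq_square power3_eq_cube algebra_simps)
    have "a x * t\<^sup>2 \<le> a_hi * (1 + t ^ 3)"
      using elim t square_le_one_plus_cube[OF t] by (intro mult_mono) auto
    moreover have "b_lo * t ^ 3 \<le> b x * t ^ 3" "b x * t ^ 3 \<le> b_hi * t ^ 3"
      using elim t by (simp_all add: mult_right_mono)
    moreover have "0 \<le> a x * t\<^sup>2" "0 \<le> b_lo * t ^ 3"
      using elim t b_lo_pos by simp_all
    ultimately show ?case
      unfolding split by (auto simp: abs_le_iff algebra_simps t_def)
  qed
  have "integrable M (\<lambda>x. (a x + b x * norm (m x)) * (m x \<bullet> m x))"
    by (rule Bochner_Integration.integrable_bound[of _ "\<lambda>x. a_hi + (a_hi + b_hi) * norm (m x) ^ 3"])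
      (use integrable_m bounds in \<open>auto elim: eventually_mono\<close>)
  then show ?thesis
    using integral_mono_AE[of M "\<lambda>x. b_lo * norm (m x) ^ 3"] integrable_m bounds
    by (auto elim: eventually_mono)
qed

lemma mass_energy_lower:
  "c_lo * (\<integral>x. \<bar>s x\<bar> * sqrt \<bar>s x\<bar> \<partial>M) \<le> (\<integral>x. c x * sroot (s x) * s x \<partial>M)"
proof -
  have bounds: "AE x in M. \<bar>c x * sroot (s x) * s x\<bar> \<le> c_hi * (\<bar>s x\<bar> * sqrt \<bar>s x\<bar>)
      \<and> c_lo * (\<bar>s x\<bar> * sqrt \<bar>s x\<bar>) \<le> c x * sroot (s x) * s x"
    using coefficient_bounds
  proof eventually_elim
    case (elim x)
    then show ?case
      using c_lo_pos unfolding mult.assoc sroot_mult_self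
      by (auto simp: abs_mult intro: mult_right_mono)
  qed
  have "integrable M (\<lambda>x. c x * sroot (s x) * s x)"
    by (rule Bochner_Integration.integrable_bound[of _ "\<lambda>x. c_hi * (\<bar>s x\<bar> * sqrt \<bar>s x\<bar>)"])
      (use integrable_s bounds in \<open>auto elim: eventually_mono\<close>)
  then show ?thesis
    using integral_mono_AE[of M "\<lambda>x. c_lo * (\<bar>s x\<bar> * sqrt \<bar>s x\<bar>)"] integrable_s bounds
    by (auto elim: eventually_mono)
qed

lemma energy_estimate:
  "b_lo / 2 * (\<integral>x. norm (m x) ^ 3 \<partial>M) + c_lo / 2 * (\<integral>x. \<bar>s x\<bar> * sqrt \<bar>s x\<bar> \<partial>M) \<le> data_bound"
proof -
  define m3 where "m3 = (\<integral>x. norm (m x) ^ 3 \<partial>M)"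
  define s32 where "s32 = (\<integral>x. \<bar>s x\<bar> * sqrt \<bar>s x\<bar> \<partial>M)"
  define g3 where "g3 = (\<integral>x. \<bar>g x\<bar> ^ 3 \<partial>M)"
  define h32 where "h32 = (\<integral>x. norm (h x) * sqrt (norm (h x)) \<partial>M)"
  define G32 where "G32 = (\<integral>x. \<bar>G x\<bar> * sqrt \<bar>G x\<bar> \<partial>M)"
  define l2 where "l2 = sqrt (2 / b_lo)"
  define l3 where "l3 = sqrt (4 * c_hi ^ 3 / c_lo)"
  have l2: "0 < l2" "l2\<^sup>2 = 2 / b_lo" and l3: "0 < l3" "l3\<^sup>2 = 4 * c_hi ^ 3 / c_lo"
    using b_lo_pos c_lo_pos c_hi_pos by (simp_all add: l2_def l3_def)
  have energy_identity:
    "(\<integral>x. (a x + b x * norm (m x)) * (m x \<bullet> m x) \<partial>M) + \<epsilon> * (\<integral>x. \<bar>d x\<bar> * d x * d x \<partial>M)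
       + (\<integral>x. c x * sroot (s x) * s x \<partial>M)
     = (\<integral>x. g x * s x \<partial>M) - (\<integral>x. m x \<bullet> h x \<partial>M) - (\<integral>x. g x * G x \<partial>M)
       + (\<integral>x. c x * sroot (s x) * G x \<partial>M)"
    using flux_equation_tested mass_equation_tested[of s] mass_equation_tested[of G] by simp
  have "0 \<le> \<epsilon> * (\<integral>x. \<bar>d x\<bar> * d x * d x \<partial>M)"
    using eps_nonneg by (simp add: mult.assoc)
  \<comment> \<open>The Young weights make the \<open>m\<close>- and \<open>s\<close>-terms below half of their lower bounds.\<close>
  moreover have "\<bar>\<integral>x. g x * s x \<partial>M\<bar> \<le> c_lo / 4 * s32 + g3 / (c_lo / 4)\<^sup>2"
    using integral_young_cube_three_halves[of M "\<lambda>x. \<bar>g x\<bar>" "\<lambda>x. \<bar>s x\<bar>" "\<lambda>x. g x * s x" "c_lo / 4"]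
      integrable_g integrable_s c_lo_pos by (simp add: s32_def g3_def abs_mult)
  moreover have "\<bar>\<integral>x. m x \<bullet> h x \<partial>M\<bar> \<le> l2 * h32 + m3 / l2\<^sup>2"
    using integral_young_cube_three_halves[of M "\<lambda>x. norm (m x)" "\<lambda>x. norm (h x)" "\<lambda>x. m x \<bullet> h x" l2]
      integrable_m integrable_h l2(1) by (simp add: m3_def h32_def Cauchy_Schwarz_ineq2)
  moreover have "\<bar>\<integral>x. g x * G x \<partial>M\<bar> \<le> G32 + g3"
    using integral_young_cube_three_halves[of M "\<lambda>x. \<bar>g x\<bar>" "\<lambda>x. \<bar>G x\<bar>" "\<lambda>x. g x * G x" 1]
      integrable_g integrable_G by (simp add: G32_def g3_def abs_mult)
  moreover have "\<bar>\<integral>x. c x * sroot (s x) * G x \<partial>M\<bar> \<le> l3 * G32 + c_hi ^ 3 * s32 / l3\<^sup>2"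
    using c_sroot_integral_le[of s G "\<lambda>x. \<bar>G x\<bar>" l3] integrable_s integrable_G l3(1)
    by (simp add: s32_def G32_def)
  moreover have "g3 / (c_lo / 4)\<^sup>2 = 16 * g3 / c_lo\<^sup>2" "m3 / l2\<^sup>2 = b_lo / 2 * m3"
    "c_hi ^ 3 * s32 / l3\<^sup>2 = c_lo / 4 * s32"
    using l2 l3 c_hi_pos b_lo_pos by (simp_all add: power2_eq_square field_simps)
  ultimately show ?thesis
    using energy_identity flux_energy_lower mass_energy_lower
    unfolding data_bound_def m3_def[symmetric] s32_def[symmetric] g3_def[symmetric] h32_def[symmetric]
      G32_def[symmetric] l2_def[symmetric] l3_def[symmetric]
    by (simp only: abs_le_iff) linarith
qed

lemma div_estimate:
  "(\<integral>x. \<bar>d x\<bar> ^ 3 \<partial>M)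
     \<le> 32 * (\<integral>x. \<bar>g x\<bar> ^ 3 \<partial>M) + 32 * c_hi ^ 3 * (\<integral>x. \<bar>s x\<bar> * sqrt \<bar>s x\<bar> \<partial>M)"
proof -
  have cube: "(\<lambda>x. (d x)\<^sup>2 * sqrt ((d x)\<^sup>2)) = (\<lambda>x. \<bar>d x\<bar> ^ 3)"
    by (rule ext, rule square_mult_sqrt_square)
  have identity: "(\<integral>x. c x * sroot (s x) * (\<bar>d x\<bar> * d x) \<partial>M) + (\<integral>x. \<bar>d x\<bar> ^ 3 \<partial>M)
      = (\<integral>x. g x * (\<bar>d x\<bar> * d x) \<partial>M)"
  proof -
    have "(\<lambda>x. d x * (\<bar>d x\<bar> * d x)) = (\<lambda>x. \<bar>d x\<bar> ^ 3)"
      by (rule ext) (simp add: abs_if power3_eq_cube)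
    then show ?thesis
      using mass_equation_tested[of "\<lambda>x. \<bar>d x\<bar> * d x"] by simp
  qed
  have "\<bar>\<integral>x. g x * (\<bar>d x\<bar> * d x) \<partial>M\<bar>
      \<le> 1 / 4 * (\<integral>x. \<bar>d x\<bar> ^ 3 \<partial>M) + (\<integral>x. \<bar>g x\<bar> ^ 3 \<partial>M) / (1 / 4)\<^sup>2"
    using integral_young_cube_three_halves[of M "\<lambda>x. \<bar>g x\<bar>" "\<lambda>x. (d x)\<^sup>2"
        "\<lambda>x. g x * (\<bar>d x\<bar> * d x)" "1 / 4"] integrable_g integrable_d
    unfolding cube by (simp add: abs_mult power2_eq_square)
  moreover have "\<bar>\<integral>x. c x * sroot (s x) * (\<bar>d x\<bar> * d x) \<partial>M\<bar>
      \<le> 1 / 4 * (\<integral>x. \<bar>d x\<bar> ^ 3 \<partial>M) + c_hi ^ 3 * (\<integral>x. \<bar>s x\<bar> * sqrt \<bar>s x\<bar> \<partial>M) / (1 / 4)\<^sup>2"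
    using c_sroot_integral_le[of s "\<lambda>x. \<bar>d x\<bar> * d x" "\<lambda>x. (d x)\<^sup>2" "1 / 4"]
      integrable_s integrable_d unfolding cube by (simp add: abs_mult power2_eq_square)
  ultimately show ?thesis
    using identity by (simp add: abs_le_iff power2_eq_square)
qed

lemma uniform_bounds:
  "(\<integral>x. norm (m x) ^ 3 \<partial>M) \<le> 2 * data_bound / b_lo"
  "(\<integral>x. \<bar>s x\<bar> * sqrt \<bar>s x\<bar> \<partial>M) \<le> 2 * data_bound / c_lo"
  "(\<integral>x. \<bar>d x\<bar> ^ 3 \<partial>M) \<le> 32 * (\<integral>x. \<bar>g x\<bar> ^ 3 \<partial>M) + 64 * c_hi ^ 3 * data_bound / c_lo"
proof -
  have "0 \<le> b_lo * (\<integral>x. norm (m x) ^ 3 \<partial>M)" "0 \<le> c_lo * (\<integral>x. \<bar>s x\<bar> * sqrt \<bar>s x\<bar> \<partial>M)"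
    using b_lo_pos c_lo_pos by simp_all
  with energy_estimate
  have "b_lo * (\<integral>x. norm (m x) ^ 3 \<partial>M) \<le> 2 * data_bound"
    "c_lo * (\<integral>x. \<bar>s x\<bar> * sqrt \<bar>s x\<bar> \<partial>M) \<le> 2 * data_bound"
    by linarith+
  with b_lo_pos c_lo_pos
  show m: "(\<integral>x. norm (m x) ^ 3 \<partial>M) \<le> 2 * data_bound / b_lo"
    and s: "(\<integral>x. \<bar>s x\<bar> * sqrt \<bar>s x\<bar> \<partial>M) \<le> 2 * data_bound / c_lo"
    by (simp_all add: pos_le_divide_eq mult.commute)
  show "(\<integral>x. \<bar>d x\<bar> ^ 3 \<partial>M) \<le> 32 * (\<integral>x. \<bar>g x\<bar> ^ 3 \<partial>M) + 64 * c_hi ^ 3 * data_bound / c_lo"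
    using div_estimate mult_left_mono[OF s, of "32 * c_hi ^ 3"] c_hi_pos by simp
qed

end

lemma (in mixed_problem_data) uniform_bounds_family:
  assumes "\<And>\<epsilon>. 0 < \<epsilon> \<Longrightarrow> tested_weak_solution M c a b g G h c_lo c_hi a_hi b_lo b_hi \<epsilon> (m \<epsilon>) (s \<epsilon>) (d \<epsilon>)"
  shows "\<exists>K_m K_s K_d. \<forall>\<epsilon>>0. (\<integral>x. norm (m \<epsilon> x) ^ 3 \<partial>M) \<le> K_m
    \<and> (\<integral>x. \<bar>s \<epsilon> x\<bar> * sqrt \<bar>s \<epsilon> x\<bar> \<partial>M) \<le> K_s \<and> (\<integral>x. \<bar>d \<epsilon> x\<bar> ^ 3 \<partial>M) \<le> K_d"
  using tested_weak_solution.uniform_bounds[OF assms] by blast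

lemma set_borel_measurable_iff_restrict:
  fixes f :: "'a \<Rightarrow> 'b::real_normed_vector"
  assumes "\<Omega> \<in> sets M"
  shows "set_borel_measurable M \<Omega> f \<longleftrightarrow> f \<in> borel_measurable (restrict_space M \<Omega>)"
  unfolding set_borel_measurable_def using assms
  by (subst borel_measurable_restrict_space_iff) auto

lemma set_integral_eq_restrict:
  fixes f :: "'a \<Rightarrow> 'b::{banach, second_countable_topology}"
  assumes "\<Omega> \<in> sets M"
  shows "(LINT x:\<Omega>|M. f x) = integral\<^sup>L (restrict_space M \<Omega>) f"
  unfolding set_lebesgue_integral_def using assms
  by (subst integral_restrict_space) simp_all

lemma Lp_iff_restrict:
  assumes "\<Omega> \<in> sets lebesgue"
  shows "f \<in> Lp p \<Omega> \<longleftrightarrow> f \<in> borel_measurable (restrict_space lebesgue \<Omega>)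
    \<and> integrable (restrict_space lebesgue \<Omega>) (\<lambda>x. \<bar>f x\<bar> powr p)"
  using assms by (simp add: Lp_def set_borel_measurable_iff_restrict set_integrable_eq)

lemma Lp_vec_iff_restrict:
  assumes "\<Omega> \<in> sets lebesgue"
  shows "v \<in> Lp_vec p \<Omega> \<longleftrightarrow> v \<in> borel_measurable (restrict_space lebesgue \<Omega>)
    \<and> integrable (restrict_space lebesgue \<Omega>) (\<lambda>x. norm (v x) powr p)"
  using assms by (simp add: Lp_vec_def set_borel_measurable_iff_restrict set_integrable_eq)

lemma Lp_three_iff_restrict:
  assumes "\<Omega> \<in> sets lebesgue"
  shows "f \<in> Lp 3 \<Omega> \<longleftrightarrow> f \<in> borel_measurable (restrict_space lebesgue \<Omega>)
    \<and> integrable (restrict_space lebesgue \<Omega>) (\<lambda>x. \<bar>f x\<bar> ^ 3)"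
  using Lp_iff_restrict[OF assms] by (simp add: powr_three)

lemma Lp_three_halves_iff_restrict:
  assumes "\<Omega> \<in> sets lebesgue"
  shows "f \<in> Lp (3 / 2) \<Omega> \<longleftrightarrow> f \<in> borel_measurable (restrict_space lebesgue \<Omega>)
    \<and> integrable (restrict_space lebesgue \<Omega>) (\<lambda>x. \<bar>f x\<bar> * sqrt \<bar>f x\<bar>)"
  using Lp_iff_restrict[OF assms] by (simp add: powr_three_halves)

lemma ess_bounded_between_iff_restrict:
  assumes "\<Omega> \<in> sets lebesgue"
  shows "ess_bounded_between \<Omega> lo hi c \<longleftrightarrow> c \<in> borel_measurable (restrict_space lebesgue \<Omega>)
    \<and> (AE x in restrict_space lebesgue \<Omega>. lo \<le> c x \<and> c x \<le> hi)"
  using assms by (simp add: ess_bounded_between_def set_borel_measurable_iff_restrict AE_restrict_space_iff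
      del: AE_conj_iff)

lemma wgrad_in_Lp_vec:
  assumes "u \<in> W1p p \<Omega>"
  shows "wgrad p \<Omega> u \<in> Lp_vec p \<Omega>"
proof -
  have "\<exists>g. g \<in> Lp_vec p \<Omega> \<and> is_weak_grad \<Omega> u g"
    using assms unfolding W1p_def by blast
  then have "wgrad p \<Omega> u \<in> Lp_vec p \<Omega> \<and> is_weak_grad \<Omega> u (wgrad p \<Omega> u)"
    unfolding wgrad_def by (rule someI_ex)
  then show ?thesis ..
qed

lemma wdiv_in_Lp:
  assumes "v \<in> Wdiv3 \<Omega>"
  shows "wdiv \<Omega> v \<in> Lp 3 \<Omega>"
proof -
  have "\<exists>d. d \<in> Lp 3 \<Omega> \<and> is_weak_div \<Omega> v d"
    using assms unfolding Wdiv3_def by blast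
  then have "wdiv \<Omega> v \<in> Lp 3 \<Omega> \<and> is_weak_div \<Omega> v (wdiv \<Omega> v)"
    unfolding wdiv_def by (rule someI_ex)
  then show ?thesis ..
qed

lemma finite_measure_restrict_lebesgue:
  "\<Omega> \<in> lmeasurable \<Longrightarrow> finite_measure (restrict_space lebesgue \<Omega>)"
  by (intro finite_measureI) (auto simp: space_restrict_space emeasure_restrict_space fmeasurable_def)

lemma AE_mult_divide_between:
  assumes \<Omega>: "\<Omega> \<in> sets lebesgue" and "0 < t" "0 \<le> a_lo" "0 \<le> b_lo"
    and "ess_bounded_between \<Omega> a_lo a_hi a" "ess_bounded_between \<Omega> b_lo b_hi b"
  shows "AE x in restrict_space lebesgue \<Omega>.
    a_lo * b_lo / t \<le> a x * b x / t \<and> a x * b x / t \<le> a_hi * b_hi / t"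
proof -
  have "AE x in restrict_space lebesgue \<Omega>. a_lo \<le> a x \<and> a x \<le> a_hi"
    "AE x in restrict_space lebesgue \<Omega>. b_lo \<le> b x \<and> b x \<le> b_hi"
    using assms(5,6) by (simp_all add: ess_bounded_between_iff_restrict[OF \<Omega>])
  then show ?thesis
    by eventually_elim (use assms(2-4) in \<open>auto intro!: divide_right_mono mult_mono\<close>)
qed

lemma mixed_problem_data_on_domain:
  fixes \<Omega> :: "(real^'n::finite) set"
  assumes \<Omega>: "\<Omega> \<in> lmeasurable" and dt: "0 < dt"
    and data: "f \<in> Lp 3 \<Omega>" "Sb \<in> W1p (3/2) \<Omega>" "Sprev \<in> Lp (3/2) \<Omega>"
    and \<phi>: "0 < \<phi>lo" "\<phi>lo \<le> \<phi>hi" "ess_bounded_between \<Omega> \<phi>lo \<phi>hi \<phi>"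
    and \<alpha>: "0 < \<alpha>lo" "ess_bounded_between \<Omega> \<alpha>lo \<alpha>hi \<alpha>"
    and \<beta>: "0 < \<beta>lo" "ess_bounded_between \<Omega> \<beta>lo \<beta>hi \<beta>"
    and \<gamma>: "0 < \<gamma>lo" "\<gamma>lo \<le> \<gamma>hi" "ess_bounded_between \<Omega> \<gamma>lo \<gamma>hi \<gamma>"
      "ess_bounded_between \<Omega> \<gamma>lo \<gamma>hi \<gamma>prev"
  shows "mixed_problem_data (restrict_space lebesgue \<Omega>) (\<lambda>x. \<phi> x * \<gamma> x / dt) \<alpha> \<beta>
    (\<lambda>x. f x + \<phi> x * \<gamma>prev x / dt * sroot (Sprev x)) Sb (wgrad (3/2) \<Omega> Sb)
    (\<phi>lo * \<gamma>lo / dt) (\<phi>hi * \<gamma>hi / dt) \<alpha>hi \<beta>lo \<beta>hi"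
proof -
  let ?N = "restrict_space lebesgue \<Omega>"
  have \<Omega>_sets: "\<Omega> \<in> sets lebesgue"
    using \<Omega> by (simp add: fmeasurable_def)
  note ess = ess_bounded_between_iff_restrict[OF \<Omega>_sets]
  have [measurable]: "\<phi> \<in> borel_measurable ?N" "\<gamma> \<in> borel_measurable ?N" "\<gamma>prev \<in> borel_measurable ?N"
    "\<alpha> \<in> borel_measurable ?N" "\<beta> \<in> borel_measurable ?N"
    using \<phi>(3) \<gamma>(3,4) \<alpha>(2) \<beta>(2) by (simp_all add: ess)
  have f [measurable]: "f \<in> borel_measurable ?N" "integrable ?N (\<lambda>x. \<bar>f x\<bar> ^ 3)"
    using data(1) by (simp_all add: Lp_three_iff_restrict[OF \<Omega>_sets])
  have Sprev [measurable]: "Sprev \<in> borel_measurable ?N" "integrable ?N (\<lambda>x. \<bar>Sprev x\<bar> * sqrt \<bar>Sprev x\<bar>)"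
    using data(3) by (simp_all add: Lp_three_halves_iff_restrict[OF \<Omega>_sets])
  have Sb: "Sb \<in> borel_measurable ?N" "integrable ?N (\<lambda>x. \<bar>Sb x\<bar> * sqrt \<bar>Sb x\<bar>)"
    using data(2) by (simp_all add: W1p_def Lp_three_halves_iff_restrict[OF \<Omega>_sets])
  have grad: "wgrad (3/2) \<Omega> Sb \<in> borel_measurable ?N"
    "integrable ?N (\<lambda>x. norm (wgrad (3/2) \<Omega> Sb x) * sqrt (norm (wgrad (3/2) \<Omega> Sb x)))"
    using wgrad_in_Lp_vec[OF data(2)] by (simp_all add: Lp_vec_iff_restrict[OF \<Omega>_sets] powr_three_halves)
  have c_lo_pos: "0 < \<phi>lo * \<gamma>lo / dt" and c_lo_le_c_hi: "\<phi>lo * \<gamma>lo / dt \<le> \<phi>hi * \<gamma>hi / dt"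
    using \<phi> \<gamma> dt by (auto intro!: divide_right_mono mult_mono)
  have "AE x in ?N. \<phi>lo * \<gamma>lo / dt \<le> \<phi> x * \<gamma>prev x / dt \<and> \<phi> x * \<gamma>prev x / dt \<le> \<phi>hi * \<gamma>hi / dt"
    using AE_mult_divide_between[OF \<Omega>_sets dt _ _ \<phi>(3) \<gamma>(4)] \<phi>(1) \<gamma>(1) by simp
  then have "AE x in ?N. \<bar>\<phi> x * \<gamma>prev x / dt\<bar> \<le> \<phi>hi * \<gamma>hi / dt"
  proof eventually_elim
    case (elim x)
    then have "0 < \<phi> x * \<gamma>prev x / dt"
      using c_lo_pos by linarith
    with elim show ?case
      by (simp only: abs_of_pos)
  qed
  then have "integrable ?N (\<lambda>x. \<bar>f x + \<phi> x * \<gamma>prev x / dt * sroot (Sprev x)\<bar> ^ 3)"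
    by (intro integrable_cube_add_mult_sroot f Sprev) simp_all
  moreover have "AE x in ?N. \<phi>lo * \<gamma>lo / dt \<le> \<phi> x * \<gamma> x / dt \<and> \<phi> x * \<gamma> x / dt \<le> \<phi>hi * \<gamma>hi / dt
      \<and> 0 \<le> \<alpha> x \<and> \<alpha> x \<le> \<alpha>hi \<and> \<beta>lo \<le> \<beta> x \<and> \<beta> x \<le> \<beta>hi"
    using AE_mult_divide_between[OF \<Omega>_sets dt _ _ \<phi>(3) \<gamma>(3)] \<phi>(1) \<gamma>(1) \<alpha> \<beta>(2)
    by (auto simp: ess)
  ultimately show ?thesis
    using c_lo_pos c_lo_le_c_hi \<beta>(1) Sb grad
    by (intro mixed_problem_data.intro finite_measure_restrict_lebesgue[OF \<Omega>]
        mixed_problem_data_axioms.intro) (assumption | simp)+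
qed

lemma abs_mult_self_in_Lp_three_halves:
  assumes "\<Omega> \<in> sets lebesgue" "d \<in> Lp 3 \<Omega>"
  shows "(\<lambda>x. \<bar>d x\<bar> * d x) \<in> Lp (3/2) \<Omega>"
proof -
  have [measurable]: "d \<in> borel_measurable (restrict_space lebesgue \<Omega>)"
    and "integrable (restrict_space lebesgue \<Omega>) (\<lambda>x. \<bar>d x\<bar> ^ 3)"
    using assms by (simp_all add: Lp_three_iff_restrict)
  moreover have "(\<lambda>x. \<bar>\<bar>d x\<bar> * d x\<bar> powr (3/2)) = (\<lambda>x. \<bar>d x\<bar> ^ 3)"
    by (simp add: powr_three_halves abs_mult power3_eq_cube)
  ultimately show ?thesis
    using assms(1) by (simp add: Lp_iff_restrict)
qed

lemma tested_weak_solution_on_domain: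
  fixes \<Omega> :: "(real^'n::finite) set"
  assumes data: "mixed_problem_data (restrict_space lebesgue \<Omega>) c a b g G (wgrad (3/2) \<Omega> G)
      c_lo c_hi a_hi b_lo b_hi"
    and \<Omega>: "\<Omega> \<in> sets lebesgue" and eps: "0 \<le> \<epsilon>" and G: "G \<in> Lp (3/2) \<Omega>"
    and m: "m \<in> Wdiv3 \<Omega>" and s: "s \<in> Lp (3/2) \<Omega>"
    and flux: "\<forall>v\<in>Wdiv3 \<Omega>.
        (LINT x:\<Omega>|lebesgue. (a x + b x * norm (m x)) * (m x \<bullet> v x))
        + \<epsilon> * (LINT x:\<Omega>|lebesgue. \<bar>wdiv \<Omega> m x\<bar> * wdiv \<Omega> m x * wdiv \<Omega> v x)
        - (LINT x:\<Omega>|lebesgue. wdiv \<Omega> v x * s x)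
        = - normal_trace_pairing \<Omega> G v"
    and mass: "\<forall>q\<in>Lp (3/2) \<Omega>.
        (LINT x:\<Omega>|lebesgue. c x * sroot (s x) * q x) + (LINT x:\<Omega>|lebesgue. wdiv \<Omega> m x * q x)
        = (LINT x:\<Omega>|lebesgue. g x * q x)"
  shows "tested_weak_solution (restrict_space lebesgue \<Omega>) c a b g G (wgrad (3/2) \<Omega> G)
    c_lo c_hi a_hi b_lo b_hi \<epsilon> m s (wdiv \<Omega> m)"
proof -
  have d: "wdiv \<Omega> m \<in> Lp 3 \<Omega>"
    using m by (rule wdiv_in_Lp)
  have m_Lp: "m \<in> Lp_vec 3 \<Omega>"
    using m by (simp add: Wdiv3_def)
  have tested: "{s, G, \<lambda>x. \<bar>wdiv \<Omega> m x\<bar> * wdiv \<Omega> m x} \<subseteq> Lp (3/2) \<Omega>"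
    using s G abs_mult_self_in_Lp_three_halves[OF \<Omega> d] by simp
  show ?thesis
  proof (intro tested_weak_solution.intro data tested_weak_solution_axioms.intro eps)
    show "m \<in> borel_measurable (restrict_space lebesgue \<Omega>)"
      "integrable (restrict_space lebesgue \<Omega>) (\<lambda>x. norm (m x) ^ 3)"
      using m_Lp by (simp_all add: Lp_vec_iff_restrict[OF \<Omega>] powr_three)
    show "s \<in> borel_measurable (restrict_space lebesgue \<Omega>)"
      "integrable (restrict_space lebesgue \<Omega>) (\<lambda>x. \<bar>s x\<bar> * sqrt \<bar>s x\<bar>)"
      using s by (simp_all add: Lp_three_halves_iff_restrict[OF \<Omega>])
    show "wdiv \<Omega> m \<in> borel_measurable (restrict_space lebesgue \<Omega>)"
      "integrable (restrict_space lebesgue \<Omega>) (\<lambda>x. \<bar>wdiv \<Omega> m x\<bar> ^ 3)"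
      using d by (simp_all add: Lp_three_iff_restrict[OF \<Omega>])
    show "(\<integral>x. (a x + b x * norm (m x)) * (m x \<bullet> m x) \<partial>restrict_space lebesgue \<Omega>)
        + \<epsilon> * (\<integral>x. \<bar>wdiv \<Omega> m x\<bar> * wdiv \<Omega> m x * wdiv \<Omega> m x \<partial>restrict_space lebesgue \<Omega>)
        - (\<integral>x. wdiv \<Omega> m x * s x \<partial>restrict_space lebesgue \<Omega>)
      = - ((\<integral>x. m x \<bullet> wgrad (3/2) \<Omega> G x \<partial>restrict_space lebesgue \<Omega>)
        + (\<integral>x. wdiv \<Omega> m x * G x \<partial>restrict_space lebesgue \<Omega>))"
      using bspec[OF flux m] unfolding normal_trace_pairing_def set_integral_eq_restrict[OF \<Omega>] .
    show "(\<integral>x. c x * sroot (s x) * q x \<partial>restrict_space lebesgue \<Omega>)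
        + (\<integral>x. wdiv \<Omega> m x * q x \<partial>restrict_space lebesgue \<Omega>)
      = (\<integral>x. g x * q x \<partial>restrict_space lebesgue \<Omega>)"
      if "q \<in> {s, G, \<lambda>x. \<bar>wdiv \<Omega> m x\<bar> * wdiv \<Omega> m x}" for q
    proof -
      have "q \<in> Lp (3/2) \<Omega>"
        using tested that by blast
      from bspec[OF mass this] show ?thesis
        unfolding set_integral_eq_restrict[OF \<Omega>] .
    qed
  qed
qed

lemma Wdiv3_norm_le:
  assumes "\<Omega> \<in> sets lebesgue"
    and "(\<integral>x. norm (v x) ^ 3 \<partial>restrict_space lebesgue \<Omega>) \<le> A"
    and "(\<integral>x. \<bar>wdiv \<Omega> v x\<bar> ^ 3 \<partial>restrict_space lebesgue \<Omega>) \<le> D"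
  shows "Wdiv3_norm \<Omega> v \<le> (A + D) powr (1/3)"
proof -
  have "0 \<le> (\<integral>x. norm (v x) ^ 3 \<partial>restrict_space lebesgue \<Omega>)
      + (\<integral>x. \<bar>wdiv \<Omega> v x\<bar> ^ 3 \<partial>restrict_space lebesgue \<Omega>)"
    by simp
  then show ?thesis
    using assms unfolding Wdiv3_norm_def set_integral_eq_restrict[OF assms(1)]
    by (simp add: powr_three powr_mono2)
qed

lemma Lp_three_halves_norm_le:
  assumes "\<Omega> \<in> sets lebesgue" "(\<integral>x. \<bar>s x\<bar> * sqrt \<bar>s x\<bar> \<partial>restrict_space lebesgue \<Omega>) \<le> B"
  shows "Lp_norm (3/2) \<Omega> s \<le> B powr (2/3)"
proof -
  have "0 \<le> (\<integral>x. \<bar>s x\<bar> * sqrt \<bar>s x\<bar> \<partial>restrict_space lebesgue \<Omega>)"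
    by simp
  then show ?thesis
    using assms unfolding Lp_norm_def set_integral_eq_restrict[OF assms(1)]
    by (simp add: powr_three_halves powr_mono2)
qed


theorem proposition2p3:
  fixes \<Omega> :: "(real^'n::finite) set"
    and dt :: real
    and f Sprev \<phi> \<alpha> \<beta> \<gamma> \<gamma>prev :: "real^'n \<Rightarrow> real"
    and Sb :: "real^'n \<Rightarrow> real"
    and \<phi>lo \<phi>hi \<alpha>lo \<alpha>hi \<beta>lo \<beta>hi \<gamma>lo \<gamma>hi :: real
    and m :: "real \<Rightarrow> real^'n \<Rightarrow> real^'n"
    and S :: "real \<Rightarrow> real^'n \<Rightarrow> real"
  assumes "open \<Omega>" and "connected \<Omega>" and "bounded \<Omega>" and "uniform_C1_regular \<Omega>"
    and "dt > 0"
    and "f \<in> Lp 3 \<Omega>"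
    and "Sb \<in> W1p (3/2) \<Omega>"
    and "Sprev \<in> Lp (3/2) \<Omega>"
    and "0 < \<phi>lo" "\<phi>lo \<le> \<phi>hi" "ess_bounded_between \<Omega> \<phi>lo \<phi>hi \<phi>"
    and "0 < \<alpha>lo" "\<alpha>lo \<le> \<alpha>hi" "ess_bounded_between \<Omega> \<alpha>lo \<alpha>hi \<alpha>"
    and "0 < \<beta>lo" "\<beta>lo \<le> \<beta>hi" "ess_bounded_between \<Omega> \<beta>lo \<beta>hi \<beta>"
    and "0 < \<gamma>lo" "\<gamma>lo \<le> \<gamma>hi" "ess_bounded_between \<Omega> \<gamma>lo \<gamma>hi \<gamma>"
    "ess_bounded_between \<Omega> \<gamma>lo \<gamma>hi \<gamma>prev"
    and sol: "\<And>\<epsilon>. \<epsilon> > 0 \<Longrightarrow>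
       m \<epsilon> \<in> Wdiv3 \<Omega> \<and> S \<epsilon> \<in> Lp (3/2) \<Omega> \<and>
       (\<forall>v\<in>Wdiv3 \<Omega>.
          (LINT x:\<Omega>|lebesgue. (\<alpha> x + \<beta> x * norm (m \<epsilon> x)) * (m \<epsilon> x \<bullet> v x))
          + \<epsilon> * (LINT x:\<Omega>|lebesgue. \<bar>wdiv \<Omega> (m \<epsilon>) x\<bar> * wdiv \<Omega> (m \<epsilon>) x * wdiv \<Omega> v x)
          - (LINT x:\<Omega>|lebesgue. wdiv \<Omega> v x * S \<epsilon> x)
          = - normal_trace_pairing \<Omega> Sb v) \<and>
       (\<forall>q\<in>Lp (3/2) \<Omega>.
          (LINT x:\<Omega>|lebesgue. \<phi> x * \<gamma> x / dt * sroot (S \<epsilon> x) * q x)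
          + (LINT x:\<Omega>|lebesgue. wdiv \<Omega> (m \<epsilon>) x * q x)
          = (LINT x:\<Omega>|lebesgue. (f x + \<phi> x * \<gamma>prev x / dt * sroot (Sprev x)) * q x))"
  shows "\<exists>Km KS. \<forall>\<epsilon>>0. Wdiv3_norm \<Omega> (m \<epsilon>) \<le> Km \<and> Lp_norm (3/2) \<Omega> (S \<epsilon>) \<le> KS"
proof -
  have \<Omega>: "\<Omega> \<in> lmeasurable"
    using \<open>bounded \<Omega>\<close> \<open>open \<Omega>\<close> by (rule lmeasurable_open)
  then have \<Omega>_sets: "\<Omega> \<in> sets lebesgue"
    by (simp add: fmeasurable_def)
  have data: "mixed_problem_data (restrict_space lebesgue \<Omega>) (\<lambda>x. \<phi> x * \<gamma> x / dt) \<alpha> \<beta>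
      (\<lambda>x. f x + \<phi> x * \<gamma>prev x / dt * sroot (Sprev x)) Sb (wgrad (3/2) \<Omega> Sb)
      (\<phi>lo * \<gamma>lo / dt) (\<phi>hi * \<gamma>hi / dt) \<alpha>hi \<beta>lo \<beta>hi"
    using assms(5-12,14,15,17-21) by (intro mixed_problem_data_on_domain[OF \<Omega>])
  have "Sb \<in> Lp (3/2) \<Omega>"
    using \<open>Sb \<in> W1p (3/2) \<Omega>\<close> by (simp add: W1p_def)
  with data \<Omega>_sets sol
  have solution: "tested_weak_solution (restrict_space lebesgue \<Omega>) (\<lambda>x. \<phi> x * \<gamma> x / dt) \<alpha> \<beta>
      (\<lambda>x. f x + \<phi> x * \<gamma>prev x / dt * sroot (Sprev x)) Sb (wgrad (3/2) \<Omega> Sb)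
      (\<phi>lo * \<gamma>lo / dt) (\<phi>hi * \<gamma>hi / dt) \<alpha>hi \<beta>lo \<beta>hi \<epsilon> (m \<epsilon>) (S \<epsilon>) (wdiv \<Omega> (m \<epsilon>))"
    if "0 < \<epsilon>" for \<epsilon>
    using that by (intro tested_weak_solution_on_domain) auto
  obtain K_m K_s K_d where K: "\<forall>\<epsilon>>0.
      (\<integral>x. norm (m \<epsilon> x) ^ 3 \<partial>restrict_space lebesgue \<Omega>) \<le> K_m
      \<and> (\<integral>x. \<bar>S \<epsilon> x\<bar> * sqrt \<bar>S \<epsilon> x\<bar> \<partial>restrict_space lebesgue \<Omega>) \<le> K_s
      \<and> (\<integral>x. \<bar>wdiv \<Omega> (m \<epsilon>) x\<bar> ^ 3 \<partial>restrict_space lebesgue \<Omega>) \<le> K_d"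
    using mixed_problem_data.uniform_bounds_family[OF data solution] by blast
  show ?thesis
    using K Wdiv3_norm_le[OF \<Omega>_sets] Lp_three_halves_norm_le[OF \<Omega>_sets] by blast
qed

end
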